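(* Let $\mathbf{b}\in H_{1,2,2}$ have odd norm. Let $U$ be the set of the twelve residue classes modulo $2H_{1,2,2}$ of the elements $\mathbf{v}_1,\mathbf{v}_2,\mathbf{v}_3,\mathbf{v}_4,\mathbf{v}_3-\mathbf{v}_1,\mathbf{v}_3-\mathbf{v}_2,\mathbf{v}_4-\mathbf{v}_3,\mathbf{v}_4-\mathbf{v}_1,\mathbf{v}_4-\mathbf{v}_2,\mathbf{v}_3-\mathbf{v}_2-\mathbf{v}_1,\mathbf{v}_4-\mathbf{v}_2-\mathbf{v}_1,\mathbf{v}_4+\mathbf{v}_3-\mathbf{v}_2-\mathbf{v}_1$. Then the map $\mathbf{x}\mapsto \mathbf{b}\mathbf{x}$ induces a permutation of $U$, and so does the map $\mathbf{x}\mapsto\mathbf{x}\mathbf{b}$.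
   Context: Let $\mathbf{i},\mathbf{j},\mathbf{k}$ be the standard quaternion units; $\overline{\mathbf{q}}$ is quaternion conjugation and $N(\mathbf{q})=\mathbf{q}\overline{\mathbf{q}}$. $H_{1,2,2}$ is the subring of the quaternions equal to the $\mathbb{Z}$-module generated by $\mathbf{v}_1=1$, $\mathbf{v}_2=\mathbf{i}$, $\mathbf{v}_3=\tfrac12(1+\mathbf{i}+\sqrt2\,\mathbf{j})$, $\mathbf{v}_4=\tfrac12(1+\mathbf{i}+\sqrt2\,\mathbf{k})$. The 24 units (elements of norm 1) of $H_{1,2,2}$ are $\pm$ the twelve elements listed in the claim. *)

theory Defs
  imports Complex_Main
begin

datatype quat = Quat (qRe: real) (qI: real) (qJ: real) (qK: real)

instantiation quat :: "{zero, one, plus, minus, uminus, times}"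
begin
definition "0 = Quat 0 0 0 0"
definition "1 = Quat 1 0 0 0"
definition "p + q = Quat (qRe p + qRe q) (qI p + qI q) (qJ p + qJ q) (qK p + qK q)"
definition "p - q = Quat (qRe p - qRe q) (qI p - qI q) (qJ p - qJ q) (qK p - qK q)"
definition "- q = Quat (- qRe q) (- qI q) (- qJ q) (- qK q)"
definition "p * q = Quat
   (qRe p * qRe q - qI p * qI q - qJ p * qJ q - qK p * qK q)
   (qRe p * qI q + qI p * qRe q + qJ p * qK q - qK p * qJ q)
   (qRe p * qJ q - qI p * qK q + qJ p * qRe q + qK p * qI q)
   (qRe p * qK q + qI p * qJ q - qJ p * qI q + qK p * qRe q)"
instance ..
end

definition qreal :: "real \<Rightarrow> quat" where "qreal r = Quat r 0 0 0"

definition qi :: quat where "qi = Quat 0 1 0 0"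
definition qj :: quat where "qj = Quat 0 0 1 0"
definition qk :: quat where "qk = Quat 0 0 0 1"

definition qconj :: "quat \<Rightarrow> quat" where
  "qconj q = Quat (qRe q) (- qI q) (- qJ q) (- qK q)"

definition qN :: "quat \<Rightarrow> quat" where "qN q = q * qconj q"

definition v1 :: quat where "v1 = 1"
definition v2 :: quat where "v2 = qi"
definition v3 :: quat where "v3 = qreal (1/2) * (1 + qi + qreal (sqrt 2) * qj)"
definition v4 :: quat where "v4 = qreal (1/2) * (1 + qi + qreal (sqrt 2) * qk)"

definition H122 :: "quat set" where
  "H122 = {qreal (of_int a) * v1 + qreal (of_int b) * v2 + qreal (of_int c) * v3
            + qreal (of_int d) * v4 | a b c d :: int. True}"

definition twoH :: "quat set" where
  "twoH = {qreal 2 * h | h. h \<in> H122}"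

definition cls :: "quat \<Rightarrow> quat set" where
  "cls x = {y \<in> H122. x - y \<in> twoH}"

definition Ucls :: "quat set set" where
  "Ucls = cls ` {v1, v2, v3, v4, v3 - v1, v3 - v2, v4 - v3, v4 - v1, v4 - v2,
                 v3 - v2 - v1, v4 - v2 - v1, v4 + v3 - v2 - v1}"

end

theory Submission
  imports Defs
begin

(* In the coordinates of the basis v1, ..., v4 the norm is the integral form
   a^2 + b^2 + (a + b)(c + d) + c^2 + d^2 + cd.  Exactly twelve of the sixteen residues mod 2 have
   odd norm, and they are the residues of the twelve listed elements: U is the set of classes of
   elements of odd norm.  Multiplication by b respects congruence mod the two-sided ideal 2H,
   preserves odd norm because N is multiplicative, and maps onto U because
   b (conj b y) = N(b) y, which is congruent to y as N(b) is odd.  An onto self-map of the finite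
   set U is a bijection; right multiplication is symmetric. *)

lemma bij_betw_induced_on_classes:
  fixes \<pi> :: "'a \<Rightarrow> 'b" and \<phi> :: "'a \<Rightarrow> 'a"
  assumes finite: "finite (\<pi> ` S)"
    and maps_to: "\<phi> ` S \<subseteq> S"
    and respects: "\<And>x y. x \<in> S \<Longrightarrow> y \<in> S \<Longrightarrow> \<pi> x = \<pi> y \<Longrightarrow> \<pi> (\<phi> x) = \<pi> (\<phi> y)"
    and onto: "\<And>y. y \<in> S \<Longrightarrow> \<exists>x\<in>S. \<pi> (\<phi> x) = \<pi> y"
  shows "\<exists>f. bij_betw f (\<pi> ` S) (\<pi> ` S) \<and> (\<forall>x\<in>S. f (\<pi> x) = \<pi> (\<phi> x))"
proof -
  define f where "f C = \<pi> (\<phi> (SOME x. x \<in> S \<and> \<pi> x = C))" for C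
  have f_\<pi>: "f (\<pi> x) = \<pi> (\<phi> x)" if "x \<in> S" for x
  proof -
    have "(SOME y. y \<in> S \<and> \<pi> y = \<pi> x) \<in> S \<and> \<pi> (SOME y. y \<in> S \<and> \<pi> y = \<pi> x) = \<pi> x"
      by (rule someI) (use that in blast)
    then show ?thesis
      unfolding f_def using that by (intro respects) auto
  qed
  have "f ` \<pi> ` S = (\<lambda>x. \<pi> (\<phi> x)) ` S"
    unfolding image_image by (rule image_cong) (simp_all add: f_\<pi>)
  also have "\<dots> = \<pi> ` S"
  proof
    show "(\<lambda>x. \<pi> (\<phi> x)) ` S \<subseteq> \<pi> ` S"
      using maps_to by auto
    show "\<pi> ` S \<subseteq> (\<lambda>x. \<pi> (\<phi> x)) ` S"
    proof
      fix C assume "C \<in> \<pi> ` S"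
      then obtain y where "y \<in> S" "C = \<pi> y" by blast
      moreover obtain x where "x \<in> S" "\<pi> (\<phi> x) = \<pi> y"
        using onto [OF \<open>y \<in> S\<close>] by blast
      ultimately show "C \<in> (\<lambda>x. \<pi> (\<phi> x)) ` S" by (metis image_eqI)
    qed
  qed
  finally have onto_classes: "f ` \<pi> ` S = \<pi> ` S" .
  then have "inj_on f (\<pi> ` S)"
    using finite by (simp add: eq_card_imp_inj_on)
  with onto_classes show ?thesis
    by (intro exI [of _ f] conjI ballI) (simp_all add: bij_betw_def f_\<pi>)
qed

lemma quat_mult_assoc: "p * q * r = p * (q * (r::quat))"
  by (simp add: times_quat_def algebra_simps)

lemma qN_mult: "qN (p * q) = qN p * qN q"
  by (simp add: qN_def qconj_def times_quat_def algebra_simps)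

lemma qN_qconj: "qN (qconj q) = qN q"
  by (simp add: qN_def qconj_def times_quat_def)

lemma qconj_mult_self: "qconj q * q = qN q"
  by (simp add: qN_def qconj_def times_quat_def algebra_simps)

lemma mult_qreal_commute: "q * qreal r = qreal r * q"
  by (simp add: qreal_def times_quat_def)

lemma qreal_mult: "qreal r * qreal s = qreal (r * s)"
  by (simp add: qreal_def times_quat_def)

lemma qreal_inject: "qreal r = qreal s \<longleftrightarrow> r = s"
  by (simp add: qreal_def)

type_synonym coords = "int \<times> int \<times> int \<times> int"

definition quat_of :: "coords \<Rightarrow> quat" where
  "quat_of = (\<lambda>(a, b, c, d). qreal (of_int a) * v1 + qreal (of_int b) * v2
                             + qreal (of_int c) * v3 + qreal (of_int d) * v4)"

lemma H122_eq_range_quat_of: "H122 = range quat_of"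
proof -
  have "H122 = {quat_of (a, b, c, d) | a b c d. True}"
    unfolding H122_def quat_of_def by simp
  also have "\<dots> = range quat_of" by auto
  finally show ?thesis .
qed

lemma quat_of_Quat:
  "quat_of (a, b, c, d) =
     Quat (a + (c + d) / 2) (b + (c + d) / 2) (c * sqrt 2 / 2) (d * sqrt 2 / 2)"
  by (simp add: quat_of_def qreal_def v1_def v2_def v3_def v4_def qi_def qj_def qk_def
      times_quat_def plus_quat_def one_quat_def algebra_simps add_divide_distrib)

lemma quat_of_inject [simp]: "quat_of x = quat_of y \<longleftrightarrow> x = y"
  by (cases x; cases y) (auto simp: quat_of_Quat)

lemma quat_of_add:
  "quat_of (a, b, c, d) + quat_of (e, f, g, h) = quat_of (a + e, b + f, c + g, d + h)"
  by (simp add: quat_of_Quat plus_quat_def field_simps)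

lemma quat_of_diff:
  "quat_of (a, b, c, d) - quat_of (e, f, g, h) = quat_of (a - e, b - f, c - g, d - h)"
  by (simp add: quat_of_Quat minus_quat_def field_simps)

lemma qreal_mult_quat_of:
  "qreal (of_int n) * quat_of (a, b, c, d) = quat_of (n * a, n * b, n * c, n * d)"
  by (simp add: quat_of_Quat qreal_def times_quat_def field_simps)

lemma qconj_quat_of: "qconj (quat_of (a, b, c, d)) = quat_of (a + c + d, - b, - c, - d)"
  by (simp add: quat_of_Quat qconj_def field_simps)

definition coords_mult :: "coords \<Rightarrow> coords \<Rightarrow> coords" where
  "coords_mult = (\<lambda>(a, b, c, d) (e, f, g, h).
     (a*e - b*f - b*g - c*g - d*f - d*g - d*h,
      a*f + b*e + b*h + c*f + c*h - d*g,
      a*g - b*h + c*e + c*g + d*f + d*g,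
      a*h + b*g - c*f + d*e + d*g + d*h))"

definition coords_norm :: "coords \<Rightarrow> int" where
  "coords_norm = (\<lambda>(a, b, c, d). a^2 + b^2 + (a + b) * (c + d) + c^2 + d^2 + c * d)"

lemma quat_of_mult: "quat_of x * quat_of y = quat_of (coords_mult x y)"
proof -
  \<comment> \<open>With sqrt 2 abstracted to any s with s * s = 2, field_simps can normalise the product.\<close>
  have "Quat (a + (c + d) / 2) (b + (c + d) / 2) (c * s / 2) (d * s / 2) *
        Quat (e + (g + h) / 2) (f + (g + h) / 2) (g * s / 2) (h * s / 2) =
        Quat ((a*e - b*f - b*g - c*g - d*f - d*g - d*h)
                + ((a*g - b*h + c*e + c*g + d*f + d*g) + (a*h + b*g - c*f + d*e + d*g + d*h)) / 2)
             ((a*f + b*e + b*h + c*f + c*h - d*g)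
                + ((a*g - b*h + c*e + c*g + d*f + d*g) + (a*h + b*g - c*f + d*e + d*g + d*h)) / 2)
             ((a*g - b*h + c*e + c*g + d*f + d*g) * s / 2)
             ((a*h + b*g - c*f + d*e + d*g + d*h) * s / 2)"
    if "s * s = 2" for s a b c d e f g h :: real
    using that unfolding times_quat_def quat.sel quat.inject
    by (intro conjI; simp add: field_simps)
  then show ?thesis
    by (cases x; cases y) (simp add: quat_of_Quat coords_mult_def)
qed

lemma qN_quat_of: "qN (quat_of x) = qreal (of_int (coords_norm x))"
proof -
  have "qN (Quat (a + (c + d) / 2) (b + (c + d) / 2) (c * s / 2) (d * s / 2)) =
        qreal (a^2 + b^2 + (a + b) * (c + d) + c^2 + d^2 + c * d)"
    if "s * s = 2" for s a b c d :: real
    using that unfolding qN_def qconj_def times_quat_def qreal_def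
    by (simp; intro conjI; simp add: field_simps power2_eq_square)
  then show ?thesis
    by (cases x) (simp add: quat_of_Quat coords_norm_def)
qed

lemma v_eq_quat_of: "v1 = quat_of (1, 0, 0, 0)" "v2 = quat_of (0, 1, 0, 0)"
    "v3 = quat_of (0, 0, 1, 0)" "v4 = quat_of (0, 0, 0, 1)"
  by (simp_all add: quat_of_Quat v1_def v2_def v3_def v4_def one_quat_def qi_def qj_def qk_def
      qreal_def times_quat_def plus_quat_def)

definition coords_mod2 :: "coords \<Rightarrow> coords" where
  "coords_mod2 = (\<lambda>(a, b, c, d). (a mod 2, b mod 2, c mod 2, d mod 2))"

lemma coords_mod2_idem [simp]: "coords_mod2 (coords_mod2 x) = coords_mod2 x"
  by (cases x) (simp add: coords_mod2_def)

lemma diff_in_twoH_iff: "quat_of x - quat_of y \<in> twoH \<longleftrightarrow> coords_mod2 x = coords_mod2 y"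
proof -
  obtain a b c d e f g h where xy: "x = (a, b, c, d)" "y = (e, f, g, h)"
    by (cases x; cases y) auto
  have twoH_eq: "twoH = {quat_of (2 * a, 2 * b, 2 * c, 2 * d) | a b c d. True}"
    unfolding twoH_def H122_eq_range_quat_of
    by (auto simp flip: qreal_mult_quat_of[of 2, simplified])
  have "quat_of x - quat_of y \<in> twoH \<longleftrightarrow>
      (\<exists>k l m n. a - e = 2 * k \<and> b - f = 2 * l \<and> c - g = 2 * m \<and> d - h = 2 * n)"
    unfolding twoH_eq xy quat_of_diff by auto
  also have "\<dots> \<longleftrightarrow> coords_mod2 x = coords_mod2 y"
    by (simp add: xy coords_mod2_def mod_eq_dvd_iff dvd_def)
  finally show ?thesis .
qed

lemma cls_quat_of: "cls (quat_of x) = quat_of ` {y. coords_mod2 y = coords_mod2 x}"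
  unfolding cls_def H122_eq_range_quat_of by (auto simp: diff_in_twoH_iff)

lemma cls_quat_of_eq_iff:
  "cls (quat_of x) = cls (quat_of y) \<longleftrightarrow> coords_mod2 x = coords_mod2 y"
proof
  assume "cls (quat_of x) = cls (quat_of y)"
  moreover have "quat_of x \<in> cls (quat_of x)" by (simp add: cls_quat_of)
  ultimately show "coords_mod2 x = coords_mod2 y" by (auto simp: cls_quat_of)
qed (simp add: cls_quat_of)

lemma cls_quat_of_mod2 [simp]: "cls (quat_of (coords_mod2 x)) = cls (quat_of x)"
  by (simp add: cls_quat_of_eq_iff)

lemma coords_mod2_mult:
  "coords_mod2 (coords_mult x y) = coords_mod2 (coords_mult (coords_mod2 x) (coords_mod2 y))"
  by (cases x; cases y) (simp only: coords_mod2_def coords_mult_def prod.case prod.inject;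
      intro conjI mod_add_cong mod_diff_cong mod_mult_cong; simp)

lemma cls_mult_cong:
  assumes "x \<in> H122" "x' \<in> H122" "y \<in> H122" "y' \<in> H122"
    and "cls x = cls x'" "cls y = cls y'"
  shows "cls (x * y) = cls (x' * y')"
proof -
  obtain u u' w w' where "x = quat_of u" "x' = quat_of u'" "y = quat_of w" "y' = quat_of w'"
    using assms(1-4) unfolding H122_eq_range_quat_of by blast
  with assms(5,6) show ?thesis
    by (simp add: quat_of_mult cls_quat_of_eq_iff coords_mod2_mult[of u w] coords_mod2_mult[of u' w'])
qed

lemma coords_norm_mod2: "coords_norm x mod 2 = coords_norm (coords_mod2 x) mod 2"
  by (cases x) (simp only: coords_mod2_def coords_norm_def prod.case power2_eq_square;
      intro mod_add_cong mod_mult_cong; simp)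

lemma cls_odd_qreal_mult:
  assumes "odd n" "y \<in> H122"
  shows "cls (qreal (of_int n) * y) = cls y"
proof -
  have odd_mult_mod2: "(n * a) mod 2 = a mod 2" for a
    using assms(1) by (metis mod_mult_left_eq mult_1 odd_iff_mod_2_eq_one)
  obtain a b c d where "y = quat_of (a, b, c, d)"
    using assms(2) unfolding H122_eq_range_quat_of by (metis prod_cases4 rangeE)
  then show ?thesis
    by (simp add: qreal_mult_quat_of cls_quat_of_eq_iff coords_mod2_def odd_mult_mod2)
qed

lemma mult_in_H122: "x \<in> H122 \<Longrightarrow> y \<in> H122 \<Longrightarrow> x * y \<in> H122"
  unfolding H122_eq_range_quat_of by (auto simp: quat_of_mult)

lemma qconj_in_H122: "x \<in> H122 \<Longrightarrow> qconj x \<in> H122"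
  unfolding H122_eq_range_quat_of by (auto simp: qconj_quat_of)

definition odd_norm :: "quat \<Rightarrow> bool" where
  "odd_norm q \<longleftrightarrow> (\<exists>n::int. odd n \<and> qN q = qreal (of_int n))"

lemma odd_norm_mult:
  assumes "odd_norm p" "odd_norm q"
  shows "odd_norm (p * q)"
proof -
  obtain m n :: int where "odd m" "qN p = qreal (of_int m)" "odd n" "qN q = qreal (of_int n)"
    using assms unfolding odd_norm_def by blast
  then have "odd (m * n)" "qN (p * q) = qreal (of_int (m * n))"
    by (simp_all add: qN_mult qreal_mult)
  then show ?thesis
    unfolding odd_norm_def by blast
qed

lemma odd_norm_qconj: "odd_norm q \<Longrightarrow> odd_norm (qconj q)"
  unfolding odd_norm_def qN_qconj .

lemma odd_norm_quat_of: "odd_norm (quat_of x) \<longleftrightarrow> odd (coords_norm x)"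
  unfolding odd_norm_def qN_quat_of qreal_inject by simp

lemma odd_norm_quat_of_mod2 [simp]: "odd_norm (quat_of (coords_mod2 x)) \<longleftrightarrow> odd_norm (quat_of x)"
  unfolding odd_norm_quat_of odd_iff_mod_2_eq_one coords_norm_mod2[of x] by simp

lemma odd_norm_cls_cong:
  assumes "x \<in> H122" "y \<in> H122" "cls x = cls y"
  shows "odd_norm x \<longleftrightarrow> odd_norm y"
proof -
  obtain u w where "x = quat_of u" "y = quat_of w"
    using assms(1,2) unfolding H122_eq_range_quat_of by blast
  with assms(3) show ?thesis
    by (metis cls_quat_of_eq_iff odd_norm_quat_of_mod2)
qed

definition H122_odd :: "quat set" where
  "H122_odd = {x \<in> H122. odd_norm x}"

lemma odd_residues:
  "{r. coords_mod2 r = r \<and> odd (coords_norm r)} =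
   {(1,0,0,0), (0,1,0,0), (0,0,1,0), (0,0,0,1), (1,0,1,0), (0,1,1,0),
    (0,0,1,1), (1,0,0,1), (0,1,0,1), (1,1,1,0), (1,1,0,1), (1,1,1,1)}"
  (is "?odd = ?twelve")
proof
  show "?odd \<subseteq> ?twelve"
  proof
    fix r assume "r \<in> ?odd"
    then have fixed: "coords_mod2 r = r" and odd: "odd (coords_norm r)" by simp_all
    obtain a b c d where r: "r = (a, b, c, d)" using prod_cases4 by blast
    have "k mod 2 = k \<longleftrightarrow> k = 0 \<or> k = 1" for k :: int
      using pos_mod_sign[of 2 k] pos_mod_bound[of 2 k] by auto
    with fixed have "(a = 0 \<or> a = 1) \<and> (b = 0 \<or> b = 1) \<and> (c = 0 \<or> c = 1) \<and> (d = 0 \<or> d = 1)"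
      unfolding r by (simp add: coords_mod2_def)
    then show "r \<in> ?twelve"
      using odd unfolding r by (elim conjE disjE; simp add: coords_norm_def)
  qed
  show "?twelve \<subseteq> ?odd"
    by (simp add: coords_mod2_def coords_norm_def)
qed

lemma Ucls_eq_cls_H122_odd: "Ucls = cls ` H122_odd"
proof -
  let ?cls = "\<lambda>u. cls (quat_of u)"
  have "Ucls = ?cls ` {(1,0,0,0), (0,1,0,0), (0,0,1,0), (0,0,0,1), (-1,0,1,0), (0,-1,1,0),
     (0,0,-1,1), (-1,0,0,1), (0,-1,0,1), (-1,-1,1,0), (-1,-1,0,1), (-1,-1,1,1)}"
    by (simp add: Ucls_def v_eq_quat_of quat_of_add quat_of_diff)
  also have "\<dots> = ?cls ` coords_mod2 ` {(1,0,0,0), (0,1,0,0), (0,0,1,0), (0,0,0,1), (-1,0,1,0),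
     (0,-1,1,0), (0,0,-1,1), (-1,0,0,1), (0,-1,0,1), (-1,-1,1,0), (-1,-1,0,1), (-1,-1,1,1)}"
    by (simp add: image_image)
  also have "\<dots> = ?cls ` {r. coords_mod2 r = r \<and> odd (coords_norm r)}"
    by (simp only: odd_residues) (simp add: coords_mod2_def insert_commute)
  also have "{r. coords_mod2 r = r \<and> odd (coords_norm r)} = coords_mod2 ` {u. odd_norm (quat_of u)}"
    by (auto simp flip: odd_norm_quat_of intro!: image_eqI)
  also have "?cls ` \<dots> = cls ` H122_odd"
    by (auto simp: H122_odd_def H122_eq_range_quat_of image_image)
  finally show ?thesis .
qed

lemma H122_odd_subset: "H122_odd \<subseteq> H122"
  unfolding H122_odd_def by blast

lemma finite_cls_H122_odd: "finite (cls ` H122_odd)"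
  unfolding Ucls_eq_cls_H122_odd [symmetric] Ucls_def by simp

lemma cls_in_Ucls_iff:
  assumes "x \<in> H122"
  shows "cls x \<in> Ucls \<longleftrightarrow> x \<in> H122_odd"
proof
  assume "cls x \<in> Ucls"
  then obtain y where "y \<in> H122" "odd_norm y" "cls x = cls y"
    unfolding Ucls_eq_cls_H122_odd H122_odd_def by auto
  with assms show "x \<in> H122_odd"
    unfolding H122_odd_def using odd_norm_cls_cong by blast
qed (simp add: Ucls_eq_cls_H122_odd)

lemma H122_odd_mult: "x \<in> H122_odd \<Longrightarrow> y \<in> H122_odd \<Longrightarrow> x * y \<in> H122_odd"
  unfolding H122_odd_def by (auto intro: mult_in_H122 odd_norm_mult)

lemma H122_odd_qconj: "x \<in> H122_odd \<Longrightarrow> qconj x \<in> H122_odd"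
  unfolding H122_odd_def by (auto intro: qconj_in_H122 odd_norm_qconj)

lemma cls_mult_qconj_left:
  assumes "b \<in> H122_odd" "y \<in> H122"
  shows "cls (b * (qconj b * y)) = cls y"
proof -
  obtain n :: int where "odd n" "qN b = qreal (of_int n)"
    using assms(1) unfolding H122_odd_def odd_norm_def by blast
  then show ?thesis
    using assms(2) by (simp add: quat_mult_assoc [symmetric] qN_def [symmetric] cls_odd_qreal_mult)
qed

lemma cls_mult_qconj_right:
  assumes "b \<in> H122_odd" "y \<in> H122"
  shows "cls (y * qconj b * b) = cls y"
proof -
  obtain n :: int where "odd n" "qN b = qreal (of_int n)"
    using assms(1) unfolding H122_odd_def odd_norm_def by blast
  then show ?thesis
    using assms(2) by (simp add: quat_mult_assoc qconj_mult_self mult_qreal_commute cls_odd_qreal_mult)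
qed

lemma mult_left_induces_bij:
  assumes b: "b \<in> H122_odd"
  shows "\<exists>f. bij_betw f (cls ` H122_odd) (cls ` H122_odd) \<and>
             (\<forall>x\<in>H122_odd. f (cls x) = cls (b * x))"
proof (rule bij_betw_induced_on_classes [OF finite_cls_H122_odd])
  show "(\<lambda>x. b * x) ` H122_odd \<subseteq> H122_odd"
    using b H122_odd_mult by blast
  show "cls (b * x) = cls (b * y)" if "x \<in> H122_odd" "y \<in> H122_odd" "cls x = cls y" for x y
    using that b H122_odd_subset by (intro cls_mult_cong) auto
  show "\<exists>x\<in>H122_odd. cls (b * x) = cls y" if y: "y \<in> H122_odd" for y
  proof
    show "qconj b * y \<in> H122_odd"
      using H122_odd_qconj [OF b] y by (rule H122_odd_mult)
    show "cls (b * (qconj b * y)) = cls y"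
      using b y H122_odd_subset by (intro cls_mult_qconj_left) auto
  qed
qed

lemma mult_right_induces_bij:
  assumes b: "b \<in> H122_odd"
  shows "\<exists>g. bij_betw g (cls ` H122_odd) (cls ` H122_odd) \<and>
             (\<forall>x\<in>H122_odd. g (cls x) = cls (x * b))"
proof (rule bij_betw_induced_on_classes [OF finite_cls_H122_odd])
  show "(\<lambda>x. x * b) ` H122_odd \<subseteq> H122_odd"
    using b H122_odd_mult by blast
  show "cls (x * b) = cls (y * b)" if "x \<in> H122_odd" "y \<in> H122_odd" "cls x = cls y" for x y
    using that b H122_odd_subset by (intro cls_mult_cong) auto
  show "\<exists>x\<in>H122_odd. cls (x * b) = cls y" if y: "y \<in> H122_odd" for y
  proof
    show "y * qconj b \<in> H122_odd"
      using y H122_odd_qconj [OF b] by (rule H122_odd_mult)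
    show "cls (y * qconj b * b) = cls y"
      using b y H122_odd_subset by (intro cls_mult_qconj_right) auto
  qed
qed

theorem lemma8:
  assumes b_in: "b \<in> H122"
    and odd_norm: "\<exists>n::int. odd n \<and> qN b = qreal (of_int n)"
  shows "(\<exists>f. bij_betw f Ucls Ucls \<and>
            (\<forall>x\<in>H122. cls x \<in> Ucls \<longrightarrow> f (cls x) = cls (b * x)))
       \<and> (\<exists>g. bij_betw g Ucls Ucls \<and>
            (\<forall>x\<in>H122. cls x \<in> Ucls \<longrightarrow> g (cls x) = cls (x * b)))"
proof -
  have b: "b \<in> H122_odd"
    using b_in odd_norm unfolding H122_odd_def odd_norm_def by blast
  have restrict: "(\<forall>x\<in>H122. cls x \<in> Ucls \<longrightarrow> P x) \<longleftrightarrow> (\<forall>x\<in>H122_odd. P x)" for P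
    using cls_in_Ucls_iff H122_odd_subset by blast
  show ?thesis
    unfolding restrict unfolding Ucls_eq_cls_H122_odd
    using mult_left_induces_bij [OF b] mult_right_induces_bij [OF b] by (rule conjI)
qed

end
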